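(* Let $A\in\mathbb{R}^{n\times n}$ be positive definite with $\operatorname{Tr}(A)=d_1>0$, and let $d_2>0$ be such that for every $x\in\mathbb{R}^n$ and every integer $1\le i\le n$ with $x_1+\cdots+x_i=1$ we have $x^TAx\ge 1/d_2$. Then for every $2$-wise independent family $\mathcal{H}$ from $[n]$ to $\{-1,1\}$, \[\mathbb{E}_{h\in\mathcal{H}}\left[\sup_{1\le i\le n}(h_1+\cdots+h_i)^2\right]\le d_1d_2.\]
   Context: A $k$-wise independent family from $[n]$ to $\{-1,1\}$ is a probability distribution $\mathcal{H}$ over functions $h:[n]\to\{-1,1\}$ such that for any $k$ distinct indices the values $h_{i_1},\dots,h_{i_k}$ (where $h_i:=h(i)$) are independent uniformly random signs; $h$ is viewed as the vector $(h_1,\dots,h_n)\in\mathbb{R}^n$. *)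

theory Defs
  imports "HOL-Probability.Probability"
begin

text \<open>Matrices in R^(n x n) and vectors in R^n are represented as functions on
  natural-number indices; only the indices 1..n are meaningful.\<close>

definition quad_form :: "nat \<Rightarrow> (nat \<Rightarrow> nat \<Rightarrow> real) \<Rightarrow> (nat \<Rightarrow> real) \<Rightarrow> real" where
  "quad_form n A x = (\<Sum>i=1..n. \<Sum>j=1..n. x i * A i j * x j)"

definition trace_mat :: "nat \<Rightarrow> (nat \<Rightarrow> nat \<Rightarrow> real) \<Rightarrow> real" where
  "trace_mat n A = (\<Sum>i=1..n. A i i)"

definition pos_def_mat :: "nat \<Rightarrow> (nat \<Rightarrow> nat \<Rightarrow> real) \<Rightarrow> bool" where
  "pos_def_mat n A \<longleftrightarrow>
     (\<forall>i\<in>{1..n}. \<forall>j\<in>{1..n}. A i j = A j i) \<and>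
     (\<forall>x. (\<exists>i\<in>{1..n}. x i \<noteq> 0) \<longrightarrow> quad_form n A x > 0)"

definition k_wise_indep :: "nat \<Rightarrow> nat \<Rightarrow> (nat \<Rightarrow> real) pmf \<Rightarrow> bool" where
  "k_wise_indep n k H \<longleftrightarrow>
     (\<forall>h\<in>set_pmf H. \<forall>i\<in>{1..n}. h i \<in> {-1, 1}) \<and>
     (\<forall>I. I \<subseteq> {1..n} \<longrightarrow> card I = k \<longrightarrow>
        (\<forall>s. (\<forall>i\<in>I. s i \<in> {-1, 1}) \<longrightarrow>
           measure_pmf.prob H {h. \<forall>i\<in>I. h i = s i} = 1 / 2 ^ k))"

end

theory Submission
  imports Defs
begin

text \<open>Write \<open>S\<^sub>i = h\<^sub>1 + \<dots> + h\<^sub>i\<close>. If \<open>S\<^sub>i \<noteq> 0\<close>, the hypothesis applied to \<open>h / S\<^sub>i\<close> gives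
  \<open>S\<^sub>i\<^sup>2 \<le> d\<^sub>2 h\<^sup>T A h\<close>, so the supremum is at most \<open>d\<^sub>2 h\<^sup>T A h\<close> pointwise.
  Pairwise independence gives \<open>E[h\<^sub>i h\<^sub>j] = \<delta>\<^sub>i\<^sub>j\<close>, hence \<open>E[h\<^sup>T A h] = Tr A = d\<^sub>1\<close>.\<close>

lemma quad_form_scale: "quad_form n A (\<lambda>k. c * x k) = c\<^sup>2 * quad_form n A x"
  unfolding quad_form_def by (simp add: sum_distrib_left power2_eq_square ac_simps)

lemma pos_def_mat_quad_form_nonneg:
  assumes "pos_def_mat n A"
  shows "quad_form n A x \<ge> 0"
proof (cases "\<exists>i\<in>{1..n}. x i \<noteq> 0")
  case True
  then show ?thesis using assms unfolding pos_def_mat_def by (simp add: less_imp_le)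
next
  case False
  then show ?thesis unfolding quad_form_def by simp
qed

lemma prefix_sum_sq_le_quad_form:
  fixes d2 :: real
  assumes normalized: "\<And>x. (\<Sum>k=1..i. x k) = 1 \<Longrightarrow> quad_form n A x \<ge> 1 / d2"
    and "d2 > 0" and "quad_form n A x \<ge> 0"
  shows "(\<Sum>k=1..i. x k)\<^sup>2 \<le> d2 * quad_form n A x"
proof -
  define S where "S = (\<Sum>k=1..i. x k)"
  show ?thesis
  proof (cases "S = 0")
    case True
    then show ?thesis using assms(2,3) by (simp add: S_def)
  next
    case False
    have "(\<Sum>k=1..i. inverse S * x k) = 1"
      using False by (simp add: S_def flip: sum_distrib_left)
    then have "1 / d2 \<le> (inverse S)\<^sup>2 * quad_form n A x"
      using normalized by (simp flip: quad_form_scale)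
    then have "1 \<le> d2 * quad_form n A x / S\<^sup>2"
      using \<open>d2 > 0\<close> by (simp add: field_simps power_inverse)
    then have "S\<^sup>2 \<le> d2 * quad_form n A x"
      using False by (simp add: le_divide_eq)
    then show ?thesis by (simp add: S_def)
  qed
qed

lemma k_wise_indep_sign:
  assumes "k_wise_indep n k H" "h \<in> set_pmf H" "i \<in> {1..n}"
  shows "h i \<in> {-1, 1}"
  using assms unfolding k_wise_indep_def by blast

lemma k_wise_indep_2_prob_equal:
  assumes "k_wise_indep n 2 H" "i \<in> {1..n}" "j \<in> {1..n}" "i \<noteq> j" "c \<in> {-1, 1}"
  shows "measure_pmf.prob H {h. h i = c \<and> h j = c} = 1 / 4"
proof -
  have "{i, j} \<subseteq> {1..n}" "card {i, j} = 2"
    using assms(2-4) by auto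
  moreover have "\<forall>k\<in>{i, j}. (\<lambda>_. c) k \<in> {-1, 1}"
    using assms(5) by simp
  ultimately have "measure_pmf.prob H {h. \<forall>k\<in>{i, j}. h k = c} = 1 / 2 ^ 2"
    using assms(1) unfolding k_wise_indep_def by presburger
  then show ?thesis by simp
qed

lemma k_wise_indep_2_integrable_prod:
  assumes "k_wise_indep n 2 H" "i \<in> {1..n}" "j \<in> {1..n}"
  shows "integrable H (\<lambda>h. h i * h j)"
proof (rule measure_pmf.integrable_const_bound)
  show "AE h in H. norm (h i * h j) \<le> 1"
    using k_wise_indep_sign[OF assms(1) _ assms(2)] k_wise_indep_sign[OF assms(1) _ assms(3)]
    by (fastforce simp: AE_measure_pmf_iff)
qed simp

lemma k_wise_indep_2_expectation_prod:
  assumes indep: "k_wise_indep n 2 H" and "i \<in> {1..n}" "j \<in> {1..n}"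
  shows "measure_pmf.expectation H (\<lambda>h. h i * h j) = (if i = j then 1 else 0)"
proof -
  have signs: "h i \<in> {-1, 1}" "h j \<in> {-1, 1}" if "h \<in> set_pmf H" for h
    using k_wise_indep_sign[OF indep that] assms(2,3) by auto
  show ?thesis
  proof (cases "i = j")
    case True
    have "AE h in H. h i * h j = 1"
      unfolding AE_measure_pmf_iff using True signs by fastforce
    then have "measure_pmf.expectation H (\<lambda>h. h i * h j) = measure_pmf.expectation H (\<lambda>_. 1)"
      by (intro integral_cong_AE) simp_all
    then show ?thesis using True by simp
  next
    case False
    define P where "P = {h. h i = 1 \<and> h j = (1::real)}"
    define Q where "Q = {h. h i = -1 \<and> h j = (-1::real)}"
    have prod_eq: "AE h in H. h i * h j = 2 * indicator P h + 2 * indicator Q h - 1"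
      unfolding AE_measure_pmf_iff
    proof
      fix h assume "h \<in> set_pmf H"
      then show "h i * h j = 2 * indicator P h + 2 * indicator Q h - 1"
        using signs[of h] by (auto simp: P_def Q_def)
    qed
    have "measure_pmf.expectation H (\<lambda>h. h i * h j)
        = measure_pmf.expectation H (\<lambda>h. 2 * indicator P h + 2 * indicator Q h - 1)"
      using prod_eq by (intro integral_cong_AE) simp_all
    also have "\<dots> = 2 * measure_pmf.prob H P + 2 * measure_pmf.prob H Q - 1"
    proof -
      have "integrable H (indicator S :: _ \<Rightarrow> real)" for S
        by (rule measure_pmf.integrable_const_bound[where B = 1]) (auto simp: indicator_def)
      then show ?thesis by simp
    qed
    also have "\<dots> = 0"
      using k_wise_indep_2_prob_equal[OF assms False, of 1] k_wise_indep_2_prob_equal[OF assms False, of "-1"]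
      by (simp add: P_def Q_def)
    finally show ?thesis using False by simp
  qed
qed

lemma quad_form_eq_sum_prod:
  "quad_form n A h = (\<Sum>i=1..n. \<Sum>j=1..n. A i j * (h i * h j))"
  unfolding quad_form_def by (simp add: ac_simps)

lemma k_wise_indep_2_integrable_quad_form:
  assumes "k_wise_indep n 2 H"
  shows "integrable H (quad_form n A)"
  unfolding quad_form_eq_sum_prod
  using k_wise_indep_2_integrable_prod[OF assms]
  by (intro Bochner_Integration.integrable_sum integrable_mult_right) auto

lemma k_wise_indep_2_expectation_quad_form:
  assumes "k_wise_indep n 2 H"
  shows "measure_pmf.expectation H (quad_form n A) = trace_mat n A"
proof -
  have "measure_pmf.expectation H (quad_form n A)
      = (\<Sum>i=1..n. \<Sum>j=1..n. A i j * measure_pmf.expectation H (\<lambda>h. h i * h j))"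
    unfolding quad_form_eq_sum_prod using k_wise_indep_2_integrable_prod[OF assms]
    by (subst Bochner_Integration.integral_sum)
      (auto intro!: sum.cong Bochner_Integration.integrable_sum)
  also have "\<dots> = (\<Sum>i=1..n. \<Sum>j=1..n. if i = j then A i j else 0)"
    using k_wise_indep_2_expectation_prod[OF assms] by (intro sum.cong refl) simp
  also have "\<dots> = trace_mat n A"
    unfolding trace_mat_def by simp
  finally show ?thesis .
qed

theorem lemma3p1:
  fixes n :: nat and A :: "nat \<Rightarrow> nat \<Rightarrow> real" and d1 d2 :: real
    and H :: "(nat \<Rightarrow> real) pmf"
  assumes "pos_def_mat n A"
    and "trace_mat n A = d1" and "d1 > 0"
    and "d2 > 0"
    and "\<And>x i. 1 \<le> i \<Longrightarrow> i \<le> n \<Longrightarrow> (\<Sum>k=1..i. x k) = 1 \<Longrightarrow> quad_form n A x \<ge> 1 / d2"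
    and "k_wise_indep n 2 H"
  shows "measure_pmf.expectation H (\<lambda>h. Max ((\<lambda>i. (\<Sum>k=1..i. h k)\<^sup>2) ` {1..n})) \<le> d1 * d2"
proof -
  have "n \<ge> 1"
    using assms(2,3) by (cases n) (auto simp: trace_mat_def)
  have max_le: "Max ((\<lambda>i. (\<Sum>k=1..i. h k)\<^sup>2) ` {1..n}) \<le> d2 * quad_form n A h" for h
    using \<open>n \<ge> 1\<close> prefix_sum_sq_le_quad_form[OF assms(5) assms(4)
        pos_def_mat_quad_form_nonneg[OF assms(1)]]
    by (subst Max_le_iff) auto
  have "measure_pmf.expectation H (\<lambda>h. Max ((\<lambda>i. (\<Sum>k=1..i. h k)\<^sup>2) ` {1..n}))
      \<le> measure_pmf.expectation H (\<lambda>h. d2 * quad_form n A h)"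
    using max_le assms(4) pos_def_mat_quad_form_nonneg[OF assms(1)]
      k_wise_indep_2_integrable_quad_form[OF assms(6)]
    \<comment> \<open>\<open>integral_mono_AE'\<close> needs integrability of the dominating side only\<close>
    by (intro integral_mono_AE') auto
  also have "\<dots> = d2 * d1"
    using k_wise_indep_2_expectation_quad_form[OF assms(6)] assms(2) by simp
  finally show ?thesis by (simp add: mult.commute)
qed

end
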